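(* For positive integers $p,q,r,s$, the transition maps satisfy: (1) $T^{p,q}_{r,s}:\Lambda^{p,q}\to\Lambda^{r,s}$ is well-defined; (2) $T^{p,q}_{r,s}$ is order-preserving; (3) $T^{r,s}_{p,q}\circ T^{p,q}_{r,s}\le\mathrm{id}_{\Lambda^{p,q}}$ (pointwise); (4) $T^{r,s}_{p,q}\circ T^{p,q}_{r,s}=\mathrm{id}_{\Lambda^{p,q}}$ if $p\le r$ and $q\le s$; (5) $(T^{p,q}_{r,s})^{-1}(0)=\{0\}$ if $p,q,r,s\ge 2$.
   Context: $\mathbb{N}=\{0,1,2,\dots\}$. For positive integers $p,q$, $\Lambda^{p,q}=\langle a,b\mid pa=qb\rangle$ is the quotient of the free commutative monoid $\mathbb{N}a\oplus\mathbb{N}b$ by the congruence generated by $\lambda+pa\sim\lambda+qb$; it is ordered by $\lambda\le\mu$ iff $\lambda+\nu=\mu$ for some $\nu\in\Lambda^{p,q}$. The transition function $\tau^p_q:\mathbb{N}\to\mathbb{N}$ is $\tau^p_q(mp+n)=mq+\min\{n,q-1\}$ ($m\in\mathbb{N}$, $0\le n<p$). The transition map $T^{p,q}_{r,s}:\Lambda^{p,q}\to\Lambda^{r,s}$ is defined by $T^{p,q}_{r,s}(ma+nb)=\tau^p_r(m)a+\tau^q_s(n)b$ for $m,n\in\mathbb{N}$. For maps $f,g$ into a poset, $f\le g$ means $f(x)\le g(x)$ for all $x$. *)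

theory Defs
  imports Main
begin

text \<open>Elements of the free commutative monoid N a + N b are represented by pairs
  (m, n) standing for m a + n b.\<close>

definition padd :: "nat \<times> nat \<Rightarrow> nat \<times> nat \<Rightarrow> nat \<times> nat" where
  "padd x y = (fst x + fst y, snd x + snd y)"

text \<open>Lambda^{p,q} is the quotient by this relation.\<close>

inductive lcong :: "nat \<Rightarrow> nat \<Rightarrow> nat \<times> nat \<Rightarrow> nat \<times> nat \<Rightarrow> bool"
  for p q :: nat where
  gen: "lcong p q (padd l (p, 0)) (padd l (0, q))"
| refl: "lcong p q x x"
| sym: "lcong p q x y \<Longrightarrow> lcong p q y x"
| trans: "lcong p q x y \<Longrightarrow> lcong p q y z \<Longrightarrow> lcong p q x z"
| add: "lcong p q x y \<Longrightarrow> lcong p q (padd x z) (padd y z)"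

definition lle :: "nat \<Rightarrow> nat \<Rightarrow> nat \<times> nat \<Rightarrow> nat \<times> nat \<Rightarrow> bool" where
  "lle p q x y \<longleftrightarrow> (\<exists>z. lcong p q (padd x z) y)"

definition tau :: "nat \<Rightarrow> nat \<Rightarrow> nat \<Rightarrow> nat" where
  "tau p q k = (k div p) * q + min (k mod p) (q - 1)"

definition trans_map :: "nat \<Rightarrow> nat \<Rightarrow> nat \<Rightarrow> nat \<Rightarrow> nat \<times> nat \<Rightarrow> nat \<times> nat" where
  "trans_map p q r s x = (tau p r (fst x), tau q s (snd x))"

end

theory Submission
  imports Defs
begin

text \<open>Each class of \<open>\<Lambda>\<^sup>p\<^sup>,\<^sup>q\<close> has a unique representative \<open>(m, n)\<close> with \<open>m < p\<close>, obtained by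
  trading \<open>p a\<close> for \<open>q b\<close> as often as possible; so congruence is equality of normal forms
  and \<open>0\<close> is alone in its class. The transition maps act on normal forms by truncating the
  \<open>a\<close>-coordinate at \<open>r - 1\<close> and applying \<open>\<tau>\<^sup>q\<^sub>s\<close> to the \<open>b\<close>-coordinate, because \<open>\<tau>\<^sup>q\<^sub>s (n + k q) = \<tau>\<^sup>q\<^sub>s n + k s\<close>
  turns the carried \<open>k q\<close> into the \<open>k s\<close> carried in \<open>\<Lambda>\<^sup>r\<^sup>,\<^sup>s\<close>.
  The remaining parts reduce to elementary facts about \<open>\<tau>\<close>: it is monotone, \<open>\<tau>\<^sup>r\<^sub>p \<circ> \<tau>\<^sup>p\<^sub>r\<close>
  only shortens the remainder modulo \<open>p\<close>, and \<open>\<tau>\<^sup>p\<^sub>r\<close> vanishes only at \<open>0\<close> when \<open>r \<ge> 2\<close>.\<close>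

definition lnf :: "nat \<Rightarrow> nat \<Rightarrow> nat \<times> nat \<Rightarrow> nat \<times> nat" where
  "lnf p q x = (fst x mod p, snd x + fst x div p * q)"

lemma lcong_add_mult: "lcong p q (m + k * p, n) (m, n + k * q)"
proof (induction k arbitrary: n)
  case 0
  show ?case by (simp add: lcong.refl)
next
  case (Suc k)
  have "lcong p q (padd (m + k * p, n) (p, 0)) (padd (m + k * p, n) (0, q))"
    by (rule lcong.gen)
  then have "lcong p q (m + Suc k * p, n) (m + k * p, n + q)"
    by (simp add: padd_def algebra_simps)
  with Suc[of "n + q"] show ?case
    by (metis lcong.trans add.assoc mult_Suc)
qed

lemma lcong_lnf: "lcong p q x (lnf p q x)"
  using lcong_add_mult[of p q "fst x mod p" "fst x div p" "snd x"]
  by (simp add: lnf_def)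

lemma lnf_padd:
  assumes "0 < p"
  shows "lnf p q (padd x z) = lnf p q (padd (lnf p q x) z)"
proof -
  obtain m n a b where x: "x = (m, n)" and z: "z = (a, b)" by force
  have "m + a = (m mod p + a) + m div p * p" by simp
  then have "(m + a) div p = m div p + (m mod p + a) div p"
    using assms by (metis div_mult_self1 add.commute not_gr0)
  moreover have "(m + a) mod p = (m mod p + a) mod p" by (simp add: mod_add_left_eq)
  ultimately show ?thesis by (simp add: lnf_def padd_def x z algebra_simps)
qed

lemma lnf_eq_if_lcong: "lcong p q x y \<Longrightarrow> 0 < p \<Longrightarrow> lnf p q x = lnf p q y"
proof (induction rule: lcong.induct)
  case (gen l)
  then show ?case
    by (cases l) (simp add: lnf_def padd_def algebra_simps div_add_self2)
next
  case (add x y z)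
  then show ?case by (metis lnf_padd)
qed auto

lemma lcong_iff_lnf_eq: "0 < p \<Longrightarrow> lcong p q x y \<longleftrightarrow> lnf p q x = lnf p q y"
  by (metis lnf_eq_if_lcong lcong_lnf lcong.sym lcong.trans)

lemma lcong_zero_iff: "0 < p \<Longrightarrow> 0 < q \<Longrightarrow> lcong p q x (0, 0) \<longleftrightarrow> x = (0, 0)"
  by (cases x) (auto simp: lcong_iff_lnf_eq lnf_def dvd_imp_le mod_0_imp_dvd)

lemma lle_if_le: "fst x \<le> fst y \<Longrightarrow> snd x \<le> snd y \<Longrightarrow> lle p q x y"
  unfolding lle_def
  by (rule exI[of _ "(fst y - fst x, snd y - snd x)"]) (simp add: padd_def lcong.refl)

lemma tau_mod: "0 < r \<Longrightarrow> tau p r k mod r = min (k mod p) (r - 1)"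
  unfolding tau_def by (simp add: mod_add_left_eq)

lemma tau_div: "0 < r \<Longrightarrow> tau p r k div r = k div p"
  unfolding tau_def by simp

lemma tau_add_mult: "0 < q \<Longrightarrow> tau q s (n + k * q) = tau q s n + k * s"
  unfolding tau_def by (simp add: algebra_simps)

lemma tau_mono:
  assumes "a \<le> b"
  shows "tau p r a \<le> tau p r b"
proof (cases "a div p = b div p")
  case True
  then have "a mod p \<le> b mod p"
    using assms by (metis add_le_cancel_left div_mult_mod_eq)
  with True show ?thesis by (simp add: tau_def)
next
  case False
  then have "a div p + 1 \<le> b div p"
    using div_le_mono[OF assms, of p] by simp
  then have "(a div p + 1) * r \<le> b div p * r" by (rule mult_le_mono1)
  then show ?thesis unfolding tau_def by (simp add: algebra_simps)
qed

lemma tau_tau: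
  assumes "0 < p" and "0 < r"
  shows "tau r p (tau p r m) = m div p * p + min (m mod p) (r - 1)"
proof -
  have "m mod p \<le> p - 1" using mod_less_divisor[OF assms(1), of m] by simp
  then show ?thesis
    using tau_mod[OF assms(2), of p m] tau_div[OF assms(2), of p m]
    unfolding tau_def[of r p] by (simp add: min_def)
qed

lemma tau_tau_le: "0 < p \<Longrightarrow> 0 < r \<Longrightarrow> tau r p (tau p r m) \<le> m"
  by (simp add: tau_tau) (metis div_mult_mod_eq add_left_mono min.cobounded1)

lemma tau_tau_eq:
  assumes "0 < p" and "p \<le> r"
  shows "tau r p (tau p r m) = m"
proof -
  have "min (m mod p) (r - 1) = m mod p"
    using assms mod_less_divisor[of p m] by linarith
  with assms show ?thesis by (simp add: tau_tau)
qed

lemma tau_eq_0_iff: "2 \<le> r \<Longrightarrow> tau p r m = 0 \<longleftrightarrow> m = 0"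
  by (cases "m = 0") (auto simp: tau_def min_def split: if_splits)

lemma lnf_trans_map:
  assumes "0 < p" and "0 < q" and "0 < r"
  shows "lnf r s (trans_map p q r s x)
    = (min (fst (lnf p q x)) (r - 1), tau q s (snd (lnf p q x)))"
  using assms by (simp add: lnf_def trans_map_def tau_mod tau_div tau_add_mult)

lemma lcong_trans_map:
  "0 < p \<Longrightarrow> 0 < q \<Longrightarrow> 0 < r \<Longrightarrow> lcong p q x y
    \<Longrightarrow> lcong r s (trans_map p q r s x) (trans_map p q r s y)"
  by (simp add: lcong_iff_lnf_eq lnf_trans_map)

lemma lle_trans_map:
  assumes "0 < p" and "0 < q" and "0 < r" and "lle p q x y"
  shows "lle r s (trans_map p q r s x) (trans_map p q r s y)"
proof -
  obtain z where z: "lcong p q (padd x z) y" using assms(4) by (auto simp: lle_def)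
  let ?T = "trans_map p q r s"
  have "lle r s (?T x) (?T (padd x z))"
    by (rule lle_if_le) (simp_all add: trans_map_def padd_def tau_mono)
  then obtain w where "lcong r s (padd (?T x) w) (?T (padd x z))"
    by (auto simp: lle_def)
  moreover have "lcong r s (?T (padd x z)) (?T y)"
    using lcong_trans_map[OF assms(1-3) z] .
  ultimately show ?thesis unfolding lle_def by (metis lcong.trans)
qed

lemma lle_trans_map_back:
  "0 < p \<Longrightarrow> 0 < q \<Longrightarrow> 0 < r \<Longrightarrow> 0 < s
    \<Longrightarrow> lle p q (trans_map r s p q (trans_map p q r s x)) x"
  by (rule lle_if_le) (simp_all add: trans_map_def tau_tau_le)

lemma trans_map_back_eq:
  "0 < p \<Longrightarrow> 0 < q \<Longrightarrow> p \<le> r \<Longrightarrow> q \<le> s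
    \<Longrightarrow> trans_map r s p q (trans_map p q r s x) = x"
  by (simp add: trans_map_def tau_tau_eq)

lemma trans_map_eq_0_iff:
  "2 \<le> r \<Longrightarrow> 2 \<le> s \<Longrightarrow> trans_map p q r s x = (0, 0) \<longleftrightarrow> x = (0, 0)"
  by (simp add: trans_map_def prod_eq_iff tau_eq_0_iff)

theorem proposition2p4:
  fixes p q r s :: nat
  assumes "0 < p" and "0 < q" and "0 < r" and "0 < s"
  shows "(\<forall>x y. lcong p q x y \<longrightarrow> lcong r s (trans_map p q r s x) (trans_map p q r s y))
    \<and> (\<forall>x y. lle p q x y \<longrightarrow> lle r s (trans_map p q r s x) (trans_map p q r s y))
    \<and> (\<forall>x. lle p q (trans_map r s p q (trans_map p q r s x)) x)
    \<and> (p \<le> r \<and> q \<le> s \<longrightarrow> (\<forall>x. lcong p q (trans_map r s p q (trans_map p q r s x)) x))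
    \<and> (2 \<le> p \<and> 2 \<le> q \<and> 2 \<le> r \<and> 2 \<le> s \<longrightarrow>
         (\<forall>x. lcong r s (trans_map p q r s x) (0, 0) \<longleftrightarrow> lcong p q x (0, 0)))"
  using assms
  by (simp add: lcong_trans_map lle_trans_map lle_trans_map_back trans_map_back_eq
      lcong.refl lcong_zero_iff trans_map_eq_0_iff)

end
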